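(* Let $g\in\mathbb{Z}^+$, $\ell\in\mathbb{Z}_{\ge0}$, $\vec i\le\vec j$ in $\mathbb{Z}^d$ and $k\in\{1,\dots,\lfloor\ell/g\rfloor\}$. Then (i) $\mathcal{O}^k\big(\mathcal{B}^\ell[\vec i:\vec j],-g,\mathfrak{B}\big)=\mathcal{B}^{\ell-gk}\big[L^k(\vec i):R^k(\vec j)\big]$, where $L(\vec i)=D_0^g(\vec i)-p$ and $R(\vec i)=D_0^g(\vec i+p)$; (ii) for every $\varphi\in\mathfrak{B}$ with $\ell_\varphi=\ell$, $\mathcal{O}^k(\varphi,-g,\mathfrak{B})\subset\{\psi\in\mathfrak{B}:\ell_\psi=\ell-gk,\ \|\rho(\varphi,\psi)\|_\infty\le C\}$ with $C=p\,n^g\frac{1-n^{-kg}}{n^g-1}+1\le\frac{pn^g}{n^g-1}+1$; (iii) $\#\mathcal{O}^k(\varphi,-g,\mathfrak{B})\le(2C+1)^d$.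
   Context: Fix integers $d\ge1$, $n\ge2$, $m\ge2$; $s=n-1$, $p=m-1$. Vector inequalities/floors componentwise; $[\vec i:\vec j]=\{\vec k\in\mathbb{Z}^d:\vec i\le\vec k\le\vec j\}$. $D_c(\vec i)=\lfloor(\vec i-c)/n\rfloor$ and $D_c^k$ its $k$-fold iterate. B-splines: $Q$ is the uniform B-spline of order $m$ with knots $0,\dots,m$, $\varphi^\ell_{\vec i}(\vec x)=\prod_kQ(n^\ell x_k-i_k)$ ($\ell\ge0$, $\vec i\in\mathbb{Z}^d$), $\mathfrak{B}$ the set of all of them, $\ell_\varphi,\vec i_\varphi$ level and index, $\mathcal{B}^\ell[\vec i:\vec j]=\{\varphi^\ell_{\vec k}:\vec k\in[\vec i:\vec j]\}$. Cells: $I^\ell_{\vec i}=\prod_k[i_kn^{-\ell},(i_k+1)n^{-\ell})$, $\mathcal{I}^\ell[\vec i:\vec j]$ the corresponding box of cells; cell children $\mathrm{ch}(I^\ell_{\vec i})=\mathcal{I}^{\ell+1}[n\vec i:n\vec i+s]$, $\mathrm{ch}^k$ the $k$-fold application, $\mathrm{ch}^{-k}(I)=\{J:I\in\mathrm{ch}^k(J)\}$ (unions over sets). Cell support $\mathbb{I}(\varphi^\ell_{\vec i})=\mathcal{I}^\ell[\vec i:\vec i+p]$, $\mathbb{I}^k(\varphi)=\mathrm{ch}^k(\mathbb{I}(\varphi))$ for $k\in\mathbb{Z}$; $\mathbb{B}^k(I)=\{\varphi\in\mathfrak{B}:I\in\mathbb{I}^{-k}(\varphi)\}$; all extended to sets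 by union. For $\mathcal{F},\mathcal{H}\subset\mathfrak{B}$, $j\in\mathbb{Z}$: $\mathcal{O}(\mathcal{F},j,\mathcal{H})=\mathbb{B}^j(\mathbb{I}(\mathcal{F}))\cap\mathcal{H}$, $\mathcal{O}(\varphi,j,\mathcal{H})=\mathcal{O}(\{\varphi\},j,\mathcal{H})$, and $\mathcal{O}^{k+1}(\mathcal{F},j,\mathcal{H})=\mathcal{O}(\mathcal{O}^k(\mathcal{F},j,\mathcal{H}),j,\mathcal{H})$. $\rho(\varphi_1,\varphi_2)=\vec i_{\varphi_1}n^{-(\ell_{\varphi_1}-\ell_{\varphi_2})}-\vec i_{\varphi_2}$, and $\|\cdot\|_\infty$ is the max of absolute values of components. *)

theory Defs
  imports "HOL-Analysis.Analysis"
begin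

text \<open>Integer vectors in Z^d are int^'d (d = CARD('d) >= 1); the order on int^'d
is the library's componentwise order.  A B-spline phi^l_i and a cell I^l_i are
both represented by their (level, index) pair.  The parameters n, m of the paper
are explicit arguments; p = m - 1, s = n - 1.\<close>

type_synonym 'd bspl = "nat \<times> (int^'d)"
type_synonym 'd cell = "nat \<times> (int^'d)"

definition cvec :: "int \<Rightarrow> int^'d" where "cvec c = (\<chi> t. c)"

definition box :: "int^'d \<Rightarrow> int^'d \<Rightarrow> (int^'d) set" where
  "box i j = {k. i \<le> k \<and> k \<le> j}"

definition Dfl :: "nat \<Rightarrow> int \<Rightarrow> int^'d \<Rightarrow> int^'d" where
  "Dfl n c i = (\<chi> t. \<lfloor>(real_of_int (i$t) - real_of_int c) / real n\<rfloor>)"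

definition allB :: "('d::finite) bspl set" where "allB = UNIV"

definition Bbox :: "nat \<Rightarrow> int^'d \<Rightarrow> int^'d \<Rightarrow> ('d::finite) bspl set" where
  "Bbox l i j = {(l, k) | k. k \<in> box i j}"

definition ch :: "nat \<Rightarrow> ('d::finite) cell \<Rightarrow> ('d::finite) cell set" where
  "ch n I = {(fst I + 1, k) | k. k \<in> box (\<chi> t. int n * (snd I $ t)) (\<chi> t. int n * (snd I $ t) + (int n - 1))}"

definition chS :: "nat \<Rightarrow> ('d::finite) cell set \<Rightarrow> ('d::finite) cell set" where
  "chS n S = (\<Union>I\<in>S. ch n I)"

definition chpow :: "nat \<Rightarrow> nat \<Rightarrow> ('d::finite) cell set \<Rightarrow> ('d::finite) cell set" where
  "chpow n k S = (chS n ^^ k) S"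

definition chneg :: "nat \<Rightarrow> nat \<Rightarrow> ('d::finite) cell set \<Rightarrow> ('d::finite) cell set" where
  "chneg n k S = {J. \<exists>I\<in>S. I \<in> chpow n k {J}}"

definition supp :: "nat \<Rightarrow> ('d::finite) bspl \<Rightarrow> ('d::finite) cell set" where
  "supp m phi = {(fst phi, k) | k. k \<in> box (snd phi) (snd phi + cvec (int m - 1))}"

definition suppk :: "nat \<Rightarrow> nat \<Rightarrow> int \<Rightarrow> ('d::finite) bspl \<Rightarrow> ('d::finite) cell set" where
  "suppk n m k phi = (if 0 \<le> k then chpow n (nat k) (supp m phi) else chneg n (nat (- k)) (supp m phi))"

definition suppS :: "nat \<Rightarrow> ('d::finite) bspl set \<Rightarrow> ('d::finite) cell set" where
  "suppS m F = (\<Union>phi\<in>F. supp m phi)"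

definition BBk :: "nat \<Rightarrow> nat \<Rightarrow> int \<Rightarrow> ('d::finite) cell set \<Rightarrow> ('d::finite) bspl set" where
  "BBk n m k S = {phi \<in> allB. \<exists>I\<in>S. I \<in> suppk n m (- k) phi}"

definition Onb :: "nat \<Rightarrow> nat \<Rightarrow> ('d::finite) bspl set \<Rightarrow> int \<Rightarrow> ('d::finite) bspl set \<Rightarrow> ('d::finite) bspl set" where
  "Onb n m F j H = BBk n m j (suppS m F) \<inter> H"

definition Opow :: "nat \<Rightarrow> nat \<Rightarrow> nat \<Rightarrow> ('d::finite) bspl set \<Rightarrow> int \<Rightarrow> ('d::finite) bspl set \<Rightarrow> ('d::finite) bspl set" where
  "Opow n m k F j H = ((\<lambda>X. Onb n m X j H) ^^ k) F"

definition rho :: "nat \<Rightarrow> ('d::finite) bspl \<Rightarrow> ('d::finite) bspl \<Rightarrow> real^'d" where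
  "rho n phi1 phi2 = (\<chi> t. real_of_int (snd phi1 $ t) * real n powi (- (int (fst phi1) - int (fst phi2)))
                          - real_of_int (snd phi2 $ t))"

end

theory Submission
  imports Defs
begin

text \<open>A B-spline \<open>\<psi>\<close> of level \<open>\<ell> - g\<close> lies in \<open>\<O>(\<B>\<^sup>\<ell>[lo:hi], -g, \<B>)\<close> iff some cell index
\<open>x \<in> [lo : hi + p]\<close> of the support of the box has its \<open>g\<close>-th ancestor \<open>\<lfloor>x / n\<^sup>g\<rfloor>\<close> in the
support of \<open>\<psi>\<close>, i.e. \<open>i\<^sub>\<psi> \<le> \<lfloor>x / n\<^sup>g\<rfloor> \<le> i\<^sub>\<psi> + p\<close>.  These conditions decouple over the coordinates,
and in one coordinate such an \<open>x\<close> exists iff \<open>\<lfloor>lo / n\<^sup>g\<rfloor> - p \<le> i\<^sub>\<psi> \<le> \<lfloor>(hi + p) / n\<^sup>g\<rfloor>\<close>.  Hence one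
step of \<open>\<O>\<close> maps the box with corners \<open>lo, hi\<close> to the box with corners \<open>L(lo), R(hi)\<close>, and (i)
follows by induction.  With \<open>N = n\<^sup>g\<close>, iterating \<open>(y - N + 1)/N \<le> \<lfloor>y/N\<rfloor> \<le> y/N\<close> shows that \<open>L\<^sup>k(a)\<close>
and \<open>R\<^sup>k(a)\<close> stay within \<open>(pN/(N-1) + 1)(1 - N\<^sup>-\<^sup>k) = C - N\<^sup>-\<^sup>k\<close> of \<open>a / N\<^sup>k\<close>, which bounds \<open>\<rho>\<close>
and the side lengths of the box \<open>\<O>\<^sup>k(\<phi>, -g, \<B>)\<close>.\<close>

lemma div_eq_iff_mult_bounds:
  fixes x c N :: int
  assumes "0 < N"
  shows "x div N = c \<longleftrightarrow> N * c \<le> x \<and> x \<le> N * c + N - 1"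
proof
  assume "x div N = c"
  then have "N * c + x mod N = x"
    using mult_div_mod_eq[of N x] by simp
  then show "N * c \<le> x \<and> x \<le> N * c + N - 1"
    using pos_mod_sign[OF assms, of x] pos_mod_bound[OF assms, of x] by linarith
next
  assume "N * c \<le> x \<and> x \<le> N * c + N - 1"
  then show "x div N = c"
    by (intro int_div_pos_eq[of x N c "x - N * c"]) auto
qed

lemma mem_ch_iff:
  assumes "n > 0"
  shows "(l', b) \<in> ch n (l, a) \<longleftrightarrow> l' = l + 1 \<and> (\<forall>t. b $ t div int n = a $ t)"
  using assms by (auto simp: ch_def box_def less_eq_vec_def div_eq_iff_mult_bounds algebra_simps)

lemma mem_chpow_iff:
  assumes "n > 0"
  shows "I \<in> chpow n g S \<longleftrightarrow> (\<exists>J\<in>S. fst I = fst J + g \<and> (\<forall>t. snd I $ t div int n ^ g = snd J $ t))"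
proof (induction g arbitrary: I)
  case 0
  show ?case by (simp add: chpow_def vec_eq_iff[symmetric] prod_eq_iff[symmetric])
next
  case (Suc g)
  have div_Suc: "x div (int n * int n ^ g) = x div int n div int n ^ g" for x
    by (simp add: zdiv_zmult2_eq)
  have "I \<in> chpow n (Suc g) S \<longleftrightarrow> (\<exists>J\<in>chpow n g S. I \<in> ch n J)"
    by (simp add: chpow_def chS_def)
  also have "\<dots> \<longleftrightarrow> (\<exists>J\<in>S. fst I = fst J + Suc g \<and> (\<forall>t. snd I $ t div int n ^ Suc g = snd J $ t))"
  proof
    assume "\<exists>J\<in>chpow n g S. I \<in> ch n J"
    then obtain J where "J \<in> chpow n g S" "I \<in> ch n J" by blast
    then show "\<exists>J\<in>S. fst I = fst J + Suc g \<and> (\<forall>t. snd I $ t div int n ^ Suc g = snd J $ t)"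
      using Suc mem_ch_iff[OF assms, of "fst I" "snd I" "fst J" "snd J"] by (auto simp: div_Suc)
  next
    assume "\<exists>J\<in>S. fst I = fst J + Suc g \<and> (\<forall>t. snd I $ t div int n ^ Suc g = snd J $ t)"
    then obtain J where J: "J \<in> S" "fst I = fst J + Suc g" "\<forall>t. snd I $ t div int n ^ Suc g = snd J $ t"
      by blast
    define parent where "parent = (fst J + g, \<chi> t. snd I $ t div int n)"
    have "parent \<in> chpow n g S"
      using Suc J by (auto simp: parent_def div_Suc)
    moreover have "I \<in> ch n parent"
      using J(2) by (cases I) (simp add: parent_def mem_ch_iff[OF assms])
    ultimately show "\<exists>J\<in>chpow n g S. I \<in> ch n J" by blast
  qed
  finally show ?case .
qed

lemma mem_supp_iff:
  "I \<in> supp m phi \<longleftrightarrow> fst I = fst phi \<and> (\<forall>t. snd phi $ t \<le> snd I $ t \<and> snd I $ t \<le> snd phi $ t + (int m - 1))"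
  by (cases I) (auto simp: supp_def box_def less_eq_vec_def cvec_def)

lemma mem_chpow_supp_iff:
  assumes "n > 0"
  shows "(l0, x) \<in> chpow n g (supp m (l, a)) \<longleftrightarrow>
    l0 = l + g \<and> (\<forall>t. a $ t \<le> x $ t div int n ^ g \<and> x $ t div int n ^ g \<le> a $ t + (int m - 1))"
proof
  assume "(l0, x) \<in> chpow n g (supp m (l, a))"
  then show "l0 = l + g \<and> (\<forall>t. a $ t \<le> x $ t div int n ^ g \<and> x $ t div int n ^ g \<le> a $ t + (int m - 1))"
    by (auto simp: mem_chpow_iff[OF assms] mem_supp_iff)
next
  assume "l0 = l + g \<and> (\<forall>t. a $ t \<le> x $ t div int n ^ g \<and> x $ t div int n ^ g \<le> a $ t + (int m - 1))"
  then show "(l0, x) \<in> chpow n g (supp m (l, a))"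
    unfolding mem_chpow_iff[OF assms]
    by (intro bexI[of _ "(l, \<chi> t. x $ t div int n ^ g)"]) (auto simp: mem_supp_iff)
qed

lemma mem_Bbox_iff: "(l', a) \<in> Bbox l lo hi \<longleftrightarrow> l' = l \<and> (\<forall>t. lo $ t \<le> a $ t \<and> a $ t \<le> hi $ t)"
  by (auto simp: Bbox_def box_def less_eq_vec_def)

lemma Bbox_singleton: "Bbox l a a = {(l, a)}"
  by (auto simp: Bbox_def box_def)

lemma mem_suppS_Bbox_iff:
  assumes "lo \<le> hi" "m \<ge> 1"
  shows "I \<in> suppS m (Bbox l lo hi) \<longleftrightarrow> fst I = l \<and> (\<forall>t. lo $ t \<le> snd I $ t \<and> snd I $ t \<le> hi $ t + (int m - 1))"
proof
  assume "I \<in> suppS m (Bbox l lo hi)"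
  then obtain a where "a \<in> box lo hi" "I \<in> supp m (l, a)"
    by (auto simp: suppS_def Bbox_def)
  then have "fst I = l" and a: "lo $ t \<le> a $ t \<and> a $ t \<le> hi $ t \<and> a $ t \<le> snd I $ t \<and> snd I $ t \<le> a $ t + (int m - 1)" for t
    by (auto simp: mem_supp_iff box_def less_eq_vec_def)
  moreover have "lo $ t \<le> snd I $ t \<and> snd I $ t \<le> hi $ t + (int m - 1)" for t
    using a[of t] by linarith
  ultimately show "fst I = l \<and> (\<forall>t. lo $ t \<le> snd I $ t \<and> snd I $ t \<le> hi $ t + (int m - 1))"
    by blast
next
  assume I: "fst I = l \<and> (\<forall>t. lo $ t \<le> snd I $ t \<and> snd I $ t \<le> hi $ t + (int m - 1))"
  define a where "a = (\<chi> t. max (lo $ t) (snd I $ t - (int m - 1)))"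
  have bounds: "lo $ t \<le> snd I $ t" "snd I $ t \<le> hi $ t + (int m - 1)" "lo $ t \<le> hi $ t" for t
    using I assms(1) by (auto simp: less_eq_vec_def)
  have "lo $ t \<le> a $ t \<and> a $ t \<le> hi $ t \<and> a $ t \<le> snd I $ t \<and> snd I $ t \<le> a $ t + (int m - 1)" for t
    using bounds[of t] assms(2) unfolding a_def by auto
  then have "a \<in> box lo hi" "I \<in> supp m (l, a)"
    using I by (auto simp: box_def less_eq_vec_def mem_supp_iff)
  then show "I \<in> suppS m (Bbox l lo hi)" by (auto simp: suppS_def Bbox_def)
qed

lemma ex_vec_iff: "(\<exists>x::'a^'d. \<forall>t. P t (x $ t)) \<longleftrightarrow> (\<forall>t. \<exists>y. P t y)"
proof
  assume "\<forall>t. \<exists>y. P t y"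
  then obtain f where "\<forall>t. P t (f t)" by metis
  then show "\<exists>x::'a^'d. \<forall>t. P t (x $ t)" by (intro exI[of _ "\<chi> t. f t"]) simp
qed auto

lemma ex_div_in_window_iff:
  fixes lo hi a p N :: int
  assumes "0 < N" "lo \<le> hi" "0 \<le> p"
  shows "(\<exists>x. lo \<le> x \<and> x \<le> hi + p \<and> a \<le> x div N \<and> x div N \<le> a + p) \<longleftrightarrow>
         lo div N - p \<le> a \<and> a \<le> (hi + p) div N"
proof
  assume "\<exists>x. lo \<le> x \<and> x \<le> hi + p \<and> a \<le> x div N \<and> x div N \<le> a + p"
  then obtain x where x: "lo \<le> x" "x \<le> hi + p" "a \<le> x div N" "x div N \<le> a + p" by blast
  have "lo div N \<le> x div N" "x div N \<le> (hi + p) div N"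
    using x(1,2) assms(1) by (simp_all add: zdiv_mono1)
  then show "lo div N - p \<le> a \<and> a \<le> (hi + p) div N" using x by linarith
next
  assume a: "lo div N - p \<le> a \<and> a \<le> (hi + p) div N"
  show "\<exists>x. lo \<le> x \<and> x \<le> hi + p \<and> a \<le> x div N \<and> x div N \<le> a + p"
  proof (cases "lo \<le> N * a")
    case True
    have "N * a \<le> N * ((hi + p) div N)" using a assms(1) by simp
    also have "\<dots> \<le> hi + p"
      using mult_div_mod_eq[of N "hi + p"] pos_mod_sign[OF assms(1), of "hi + p"] by linarith
    finally show ?thesis
      using True assms by (intro exI[of _ "N * a"]) auto
  next
    case False
    then have "(N * a) div N \<le> lo div N" using assms(1) by (intro zdiv_mono1) auto
    then show ?thesis using a assms by (intro exI[of _ lo]) auto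
  qed
qed

text \<open>With \<open>N = n\<^sup>g\<close> and \<open>p = m - 1\<close>, these are the maps \<open>L\<close> and \<open>R\<close> of the statement.\<close>

definition coarse_lo :: "int \<Rightarrow> int \<Rightarrow> int^'d \<Rightarrow> int^'d" where
  "coarse_lo N p x = (\<chi> t. x $ t div N - p)"

definition coarse_hi :: "int \<Rightarrow> int \<Rightarrow> int^'d \<Rightarrow> int^'d" where
  "coarse_hi N p x = (\<chi> t. (x $ t + p) div N)"

lemma mem_Onb_Bbox_iff:
  assumes "n > 0" "m \<ge> 1" "lo \<le> hi"
  shows "(l', a) \<in> Onb n m (Bbox l lo hi) (- int g) allB \<longleftrightarrow>
    l = l' + g \<and> (\<forall>t. coarse_lo (int n ^ g) (int m - 1) lo $ t \<le> a $ t \<and>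
                       a $ t \<le> coarse_hi (int n ^ g) (int m - 1) hi $ t)"
proof -
  let ?N = "int n ^ g" and ?p = "int m - 1"
  let ?window = "\<lambda>t x. lo $ t \<le> x \<and> x \<le> hi $ t + ?p \<and> a $ t \<le> x div ?N \<and> x div ?N \<le> a $ t + ?p"
  have "(l', a) \<in> Onb n m (Bbox l lo hi) (- int g) allB \<longleftrightarrow>
        (\<exists>I. I \<in> suppS m (Bbox l lo hi) \<and> I \<in> chpow n g (supp m (l', a)))"
    by (auto simp: Onb_def BBk_def suppk_def allB_def)
  also have "\<dots> \<longleftrightarrow> l = l' + g \<and> (\<exists>x::int^'a. \<forall>t. ?window t (x $ t))"
    by (auto simp: mem_suppS_Bbox_iff[OF assms(3,2)] mem_chpow_supp_iff[OF assms(1)])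
  also have "\<dots> \<longleftrightarrow> l = l' + g \<and> (\<forall>t. \<exists>y. ?window t y)"
    by (simp only: ex_vec_iff[of ?window])
  also have "\<dots> \<longleftrightarrow> l = l' + g \<and> (\<forall>t. lo $ t div ?N - ?p \<le> a $ t \<and> a $ t \<le> (hi $ t + ?p) div ?N)"
    using assms ex_div_in_window_iff[where p = ?p] by (auto simp: less_eq_vec_def)
  finally show ?thesis by (simp add: coarse_lo_def coarse_hi_def)
qed

lemma Onb_Bbox:
  assumes "n > 0" "m \<ge> 1" "lo \<le> hi" "g \<le> l"
  shows "Onb n m (Bbox l lo hi) (- int g) allB =
    Bbox (l - g) (coarse_lo (int n ^ g) (int m - 1) lo) (coarse_hi (int n ^ g) (int m - 1) hi)"
proof (rule set_eqI)
  fix psi :: "'a bspl"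
  show "psi \<in> Onb n m (Bbox l lo hi) (- int g) allB \<longleftrightarrow>
    psi \<in> Bbox (l - g) (coarse_lo (int n ^ g) (int m - 1) lo) (coarse_hi (int n ^ g) (int m - 1) hi)"
    using assms(4) by (cases psi) (auto simp: mem_Onb_Bbox_iff[OF assms(1-3)] mem_Bbox_iff)
qed

lemma coarse_lo_le_coarse_hi:
  assumes "0 < N" "0 \<le> p" "x \<le> y"
  shows "coarse_lo N p x \<le> coarse_hi N p y"
proof -
  have "x $ t div N - p \<le> (y $ t + p) div N" for t
  proof -
    have "x $ t \<le> y $ t" using assms(3) by (simp add: less_eq_vec_def)
    then have "x $ t div N \<le> (y $ t + p) div N" using assms(1,2) by (intro zdiv_mono1) auto
    then show ?thesis using assms(2) by linarith
  qed
  then show ?thesis by (simp add: coarse_lo_def coarse_hi_def less_eq_vec_def)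
qed

lemma coarse_lo_iterate_le_coarse_hi_iterate:
  assumes "0 < N" "0 \<le> p" "x \<le> y"
  shows "(coarse_lo N p ^^ k) x \<le> (coarse_hi N p ^^ k) y"
  using assms by (induction k) (simp_all add: coarse_lo_le_coarse_hi)

lemma Opow_Bbox:
  assumes "n > 0" "m \<ge> 1" "lo \<le> hi" "g * k \<le> l"
  shows "Opow n m k (Bbox l lo hi) (- int g) allB =
    Bbox (l - g * k) ((coarse_lo (int n ^ g) (int m - 1) ^^ k) lo) ((coarse_hi (int n ^ g) (int m - 1) ^^ k) hi)"
  using assms(4)
proof (induction k)
  case 0
  show ?case by (simp add: Opow_def)
next
  case (Suc k)
  let ?L = "coarse_lo (int n ^ g) (int m - 1)" and ?R = "coarse_hi (int n ^ g) (int m - 1)"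
  have "(?L ^^ k) lo \<le> (?R ^^ k) hi"
    using assms by (intro coarse_lo_iterate_le_coarse_hi_iterate) auto
  moreover have "l - g * k - g = l - g * Suc k" by (simp add: algebra_simps)
  ultimately show ?case
    using Suc Onb_Bbox[OF assms(1,2), of "(?L ^^ k) lo" "(?R ^^ k) hi" g "l - g * k"]
    by (simp add: Opow_def)
qed

lemma Dfl_0_iterate:
  assumes "n > 0"
  shows "(Dfl n 0 ^^ g) x = (\<chi> t. x $ t div int n ^ g)"
proof (induction g)
  case 0
  show ?case by (simp add: vec_eq_iff)
next
  case (Suc g)
  have "real n = real_of_int (int n)" by simp
  then have Dfl_0: "Dfl n 0 y = (\<chi> t. y $ t div int n)" for y :: "int^'a"
    unfolding Dfl_def by (simp only: diff_zero of_int_0 floor_divide_of_int_eq)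
  have "(Dfl n 0 ^^ Suc g) x = Dfl n 0 ((Dfl n 0 ^^ g) x)" by simp
  also have "\<dots> = (\<chi> t. x $ t div int n ^ g div int n)" by (simp add: Dfl_0 Suc)
  also have "\<dots> = (\<chi> t. x $ t div int n ^ Suc g)" by (simp only: power_Suc2 zdiv_zmult2_eq of_nat_0_le_iff)
  finally show ?case .
qed

definition coarsening_drift :: "int \<Rightarrow> int \<Rightarrow> nat \<Rightarrow> real" where
  "coarsening_drift N p k = (of_int p * of_int N / (of_int N - 1) + 1) * (1 - 1 / of_int N ^ k)"

lemma coarsening_drift_nonneg:
  assumes "1 < N" "0 \<le> p"
  shows "0 \<le> coarsening_drift N p k"
  using assms by (simp add: coarsening_drift_def)

lemma coarsening_drift_add_le:
  assumes "1 < N" "0 \<le> p"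
  shows "coarsening_drift N p k + 1 / of_int N ^ k \<le> of_int p * of_int N / (of_int N - 1) + 1"
proof -
  let ?c = "of_int p * of_int N / (of_int N - 1) + 1 :: real" and ?q = "1 / of_int N ^ k :: real"
  have "0 \<le> ?q" "1 \<le> ?c" using assms by simp_all
  then have "0 \<le> ?q * (?c - 1)" by (intro mult_nonneg_nonneg) simp_all
  moreover have "coarsening_drift N p k + ?q = ?c - ?q * (?c - 1)"
    unfolding coarsening_drift_def by (simp only: ring_distribs mult_1_right mult_1_left) simp
  ultimately show ?thesis by linarith
qed

lemma coarsening_drift_eq:
  fixes n g k :: nat
  assumes "n \<ge> 2" "g > 0"
  shows "of_int p * real n ^ g * (1 - real n powi (- (int k * int g))) / (real n ^ g - 1) + 1
           = coarsening_drift (int n ^ g) p k + 1 / of_int (int n ^ g) ^ k"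
proof -
  have "- (int k * int g) = - int (g * k)" by simp
  then have q: "real n powi (- (int k * int g)) = 1 / (real n ^ g) ^ k"
    by (simp only: power_int_minus_divide power_int_of_nat power_mult)
  have "1 < real n ^ g"
    using assms by (intro one_less_power) auto
  then show ?thesis
    unfolding q coarsening_drift_def of_int_power of_int_of_nat_eq
    by (simp add: field_simps) (simp add: add_divide_distrib[symmetric])
qed

lemma of_int_div_ge:
  fixes y N :: int
  assumes "0 < N"
  shows "(of_int y - of_int N + 1) / of_int N \<le> (of_int (y div N) :: real)"
proof -
  have "y - N + 1 \<le> N * (y div N)"
    using mult_div_mod_eq[of N y] pos_mod_bound[OF assms, of y] by linarith
  then have "of_int y - of_int N + 1 \<le> (of_int N * of_int (y div N) :: real)"
    by (metis of_int_1 of_int_add of_int_diff of_int_le_iff of_int_mult)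
  then show ?thesis
    using assms by (simp add: divide_le_eq mult.commute)
qed

lemma of_int_div_le:
  fixes y N :: int
  shows "(of_int (y div N) :: real) \<le> of_int y / of_int N"
  using of_int_floor_le[of "of_int y / of_int N :: real"] by (simp add: floor_divide_of_int_eq)

lemma iterate_div_sub_lower:
  fixes N p a :: int
  assumes "1 < N"
  shows "of_int a / of_int N ^ k - coarsening_drift N p k \<le> of_int (((\<lambda>y. y div N - p) ^^ k) a)"
proof (induction k)
  case 0
  show ?case by (simp add: coarsening_drift_def)
next
  case (Suc k)
  define y where "y = ((\<lambda>y. y div N - p) ^^ k) a"
  define r where "r = (of_int N :: real)"
  define c where "c = of_int p * r / (r - 1) + 1"
  have r: "1 < r" using assms by (simp add: r_def)
  have "(of_int a / r ^ k - c * (1 - 1 / r ^ k) - r + 1) / r \<le> (of_int y - r + 1) / r"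
    using Suc r by (intro divide_right_mono) (auto simp: y_def r_def c_def coarsening_drift_def)
  also have "\<dots> \<le> of_int (y div N)"
    using of_int_div_ge[of N y] assms by (simp add: r_def)
  finally have "(of_int a / r ^ k - c * (1 - 1 / r ^ k) - r + 1) / r - of_int p \<le> of_int (y div N - p)"
    by simp
  moreover have "(of_int a / r ^ k - c * (1 - 1 / r ^ k) - r + 1) / r - of_int p
      = of_int a / r ^ Suc k - c * (1 - 1 / r ^ Suc k)"
    using r by (simp add: c_def field_simps)
  ultimately show ?case by (simp add: y_def r_def c_def coarsening_drift_def)
qed

lemma iterate_add_div_upper:
  fixes N p a :: int
  assumes "1 < N"
  shows "(of_int (((\<lambda>y. (y + p) div N) ^^ k) a) :: real)
           \<le> of_int a / of_int N ^ k + of_int p / (of_int N - 1) * (1 - 1 / of_int N ^ k)"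
proof (induction k)
  case 0
  show ?case by simp
next
  case (Suc k)
  define y where "y = ((\<lambda>y. (y + p) div N) ^^ k) a"
  define r where "r = (of_int N :: real)"
  have r: "1 < r" using assms by (simp add: r_def)
  have "of_int ((y + p) div N) \<le> (of_int y + of_int p) / r"
    using of_int_div_le[of "y + p" N] by (simp add: r_def)
  also have "\<dots> \<le> (of_int a / r ^ k + of_int p / (r - 1) * (1 - 1 / r ^ k) + of_int p) / r"
    using Suc r by (intro divide_right_mono) (auto simp: y_def r_def)
  also have "\<dots> = of_int a / r ^ Suc k + of_int p / (r - 1) * (1 - 1 / r ^ Suc k)"
    using r by (simp add: field_simps)
  finally show ?case by (simp add: y_def r_def)
qed

lemma coarse_lo_iterate_nth: "(coarse_lo N p ^^ k) x $ t = ((\<lambda>y. y div N - p) ^^ k) (x $ t)"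
  by (induction k) (simp_all add: coarse_lo_def)

lemma coarse_hi_iterate_nth: "(coarse_hi N p ^^ k) x $ t = ((\<lambda>y. (y + p) div N) ^^ k) (x $ t)"
  by (induction k) (simp_all add: coarse_hi_def)

lemma coarse_iterate_drift:
  assumes "1 < N" "0 \<le> p"
  shows "of_int (a $ t) / of_int N ^ k - coarsening_drift N p k \<le> of_int ((coarse_lo N p ^^ k) a $ t)"
    and "of_int ((coarse_hi N p ^^ k) a $ t) \<le> of_int (a $ t) / of_int N ^ k + coarsening_drift N p k"
proof -
  show "of_int (a $ t) / of_int N ^ k - coarsening_drift N p k \<le> of_int ((coarse_lo N p ^^ k) a $ t)"
    using iterate_div_sub_lower[OF assms(1)] by (simp add: coarse_lo_iterate_nth)
  have "of_int p \<le> (of_int p * of_int N :: real)"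
    using assms by (simp add: mult_le_cancel_left1)
  then have "of_int p / (of_int N - 1) \<le> (of_int p * of_int N / (of_int N - 1) + 1 :: real)"
    using assms by (simp add: divide_right_mono add_increasing2)
  moreover have "0 \<le> 1 - 1 / (of_int N ^ k :: real)"
    using assms by simp
  ultimately have "of_int p / (of_int N - 1) * (1 - 1 / of_int N ^ k) \<le> coarsening_drift N p k"
    unfolding coarsening_drift_def by (rule mult_right_mono)
  then show "of_int ((coarse_hi N p ^^ k) a $ t) \<le> of_int (a $ t) / of_int N ^ k + coarsening_drift N p k"
    using iterate_add_div_upper[OF assms(1), where p = p and k = k and a = "a $ t"] by (simp add: coarse_hi_iterate_nth)
qed

lemma infnorm_le_cart:
  fixes x :: "real^'d"
  assumes "\<And>t. \<bar>x $ t\<bar> \<le> C"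
  shows "infnorm x \<le> C"
  unfolding infnorm_cart using assms by (intro cSup_least) auto

lemma infnorm_rho_le_coarsening_drift:
  assumes "n \<ge> 2" "g > 0" "g * k \<le> l" "m \<ge> 1"
    and "psi \<in> Bbox (l - g * k) ((coarse_lo (int n ^ g) (int m - 1) ^^ k) a) ((coarse_hi (int n ^ g) (int m - 1) ^^ k) a)"
  shows "infnorm (rho n (l, a) psi) \<le> coarsening_drift (int n ^ g) (int m - 1) k"
proof (rule infnorm_le_cart)
  fix t
  let ?N = "int n ^ g" and ?p = "int m - 1"
  obtain b where psi: "psi = (l - g * k, b)"
    and b: "(coarse_lo ?N ?p ^^ k) a $ t \<le> b $ t" "b $ t \<le> (coarse_hi ?N ?p ^^ k) a $ t"
    using assms(5) by (cases psi) (auto simp: mem_Bbox_iff)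
  have N: "1 < ?N" and p: "0 \<le> ?p"
    using assms(1,2,4) by (auto intro: one_less_power)
  have "of_int (a $ t) / of_int ?N ^ k - coarsening_drift ?N ?p k \<le> of_int ((coarse_lo ?N ?p ^^ k) a $ t)"
      "of_int ((coarse_hi ?N ?p ^^ k) a $ t) \<le> of_int (a $ t) / of_int ?N ^ k + coarsening_drift ?N ?p k"
    by (rule coarse_iterate_drift[OF N p])+
  moreover have "of_int ((coarse_lo ?N ?p ^^ k) a $ t) \<le> (of_int (b $ t) :: real)"
      "of_int (b $ t) \<le> (of_int ((coarse_hi ?N ?p ^^ k) a $ t) :: real)"
    using b by simp_all
  moreover have "rho n (l, a) psi $ t = of_int (a $ t) / of_int ?N ^ k - of_int (b $ t)"
  proof -
    have "- (int l - int (l - g * k)) = - int (g * k)"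
      using assms(3) by simp
    then have "real n powi (- (int l - int (l - g * k))) = 1 / (real n ^ g) ^ k"
      by (simp only: power_int_minus_divide power_int_of_nat power_mult)
    then show ?thesis by (simp add: rho_def psi)
  qed
  ultimately show "\<bar>rho n (l, a) psi $ t\<bar> \<le> coarsening_drift ?N ?p k"
    by linarith
qed

lemma box_bij_betw_PiE: "bij_betw vec_nth (box lo hi) (PiE UNIV (\<lambda>t. {lo $ t..hi $ t}))"
  by (rule bij_betwI[where g = vec_lambda]) (auto simp: box_def less_eq_vec_def PiE_UNIV_domain Pi_iff)

lemma finite_box: "finite (box lo hi)"
proof -
  have "finite (PiE UNIV (\<lambda>t. {lo $ t..hi $ t}))"
    by (intro finite_PiE) auto
  then show ?thesis
    using bij_betw_finite[OF box_bij_betw_PiE] by blast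
qed

lemma card_box: "card (box lo hi) = (\<Prod>t\<in>UNIV. nat (hi $ t - lo $ t + 1))"
  using bij_betw_same_card[OF box_bij_betw_PiE] by (simp add: card_PiE)

lemma Bbox_eq_image_box: "Bbox l lo hi = Pair l ` box lo hi"
  by (auto simp: Bbox_def)

lemma finite_Bbox: "finite (Bbox l lo hi)"
  by (simp add: Bbox_eq_image_box finite_box)

lemma card_Bbox: "card (Bbox l lo hi) = (\<Prod>t\<in>UNIV. nat (hi $ t - lo $ t + 1))"
  by (simp add: Bbox_eq_image_box card_image inj_on_def card_box)

lemma card_coarse_window_le:
  fixes a :: "int^'d"
  assumes "1 < N" "0 \<le> p"
  shows "real (card (Bbox l ((coarse_lo N p ^^ k) a) ((coarse_hi N p ^^ k) a)))
           \<le> (2 * coarsening_drift N p k + 1) ^ CARD('d)"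
proof -
  let ?L = "(coarse_lo N p ^^ k) a" and ?R = "(coarse_hi N p ^^ k) a"
  have "real (card (Bbox l ?L ?R)) = (\<Prod>t\<in>UNIV. real (nat (?R $ t - ?L $ t + 1)))"
    by (simp add: card_Bbox)
  also have "\<dots> \<le> (\<Prod>t\<in>(UNIV :: 'd set). 2 * coarsening_drift N p k + 1)"
  proof (rule prod_mono)
    fix t :: 'd
    have "of_int (?R $ t - ?L $ t + 1) \<le> 2 * coarsening_drift N p k + 1"
      using coarse_iterate_drift[OF assms, where a = a and t = t and k = k] by simp
    then show "0 \<le> real (nat (?R $ t - ?L $ t + 1)) \<and> real (nat (?R $ t - ?L $ t + 1)) \<le> 2 * coarsening_drift N p k + 1"
      using coarsening_drift_nonneg[OF assms, of k] by (cases "0 \<le> ?R $ t - ?L $ t + 1") auto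
  qed
  also have "\<dots> = (2 * coarsening_drift N p k + 1) ^ CARD('d)" by simp
  finally show ?thesis .
qed

lemma Opow_singleton:
  assumes "n > 0" "m \<ge> 1" "g * k \<le> l"
  shows "Opow n m k {(l, a)} (- int g) allB =
    Bbox (l - g * k) ((coarse_lo (int n ^ g) (int m - 1) ^^ k) a) ((coarse_hi (int n ^ g) (int m - 1) ^^ k) a)"
  using Opow_Bbox[OF assms(1,2) order_refl assms(3)] by (simp add: Bbox_singleton)

lemma Opow_singleton_subset:
  assumes "n \<ge> 2" "g > 0" "m \<ge> 1" "g * k \<le> l"
  shows "Opow n m k {(l, a)} (- int g) allB
           \<subseteq> {psi \<in> allB. fst psi = l - g * k \<and> infnorm (rho n (l, a) psi) \<le> coarsening_drift (int n ^ g) (int m - 1) k}"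
proof
  fix psi assume "psi \<in> Opow n m k {(l, a)} (- int g) allB"
  then have psi: "psi \<in> Bbox (l - g * k) ((coarse_lo (int n ^ g) (int m - 1) ^^ k) a) ((coarse_hi (int n ^ g) (int m - 1) ^^ k) a)"
    using Opow_singleton[where n = n and a = a, OF _ assms(3,4)] assms(1) by simp
  then show "psi \<in> {psi \<in> allB. fst psi = l - g * k \<and> infnorm (rho n (l, a) psi) \<le> coarsening_drift (int n ^ g) (int m - 1) k}"
    using infnorm_rho_le_coarsening_drift[OF assms(1,2,4,3) psi] by (auto simp: Bbox_def allB_def)
qed

lemma card_Opow_singleton_le:
  fixes a :: "int^'d"
  assumes "n \<ge> 2" "g > 0" "m \<ge> 1" "g * k \<le> l"
  shows "finite (Opow n m k {(l, a)} (- int g) allB) \<and>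
    real (card (Opow n m k {(l, a)} (- int g) allB)) \<le> (2 * coarsening_drift (int n ^ g) (int m - 1) k + 1) ^ CARD('d)"
proof -
  have "1 < int n ^ g"
    using assms(1,2) by (intro one_less_power) auto
  moreover have "n > 0"
    using assms(1) by simp
  ultimately show ?thesis
    using card_coarse_window_le[of "int n ^ g" "int m - 1" "l - g * k" k a] assms
    by (simp add: Opow_singleton finite_Bbox)
qed

theorem lemma3p16:
  fixes n m g l k :: nat and i j :: "int^'d"
  assumes "n \<ge> 2" and "m \<ge> 2"
    and "g > 0" and "i \<le> j" and "1 \<le> k" and "k \<le> l div g"
  defines "p \<equiv> int m - 1"
  defines "Lf \<equiv> (\<lambda>x::int^'d. (Dfl n 0 ^^ g) x - cvec p)"
  defines "Rf \<equiv> (\<lambda>x::int^'d. (Dfl n 0 ^^ g) (x + cvec p))"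
  defines "C \<equiv> real_of_int p * real n ^ g * (1 - real n powi (- (int k * int g))) / (real n ^ g - 1) + 1"
  shows "(Opow n m k (Bbox l i j) (- int g) allB = Bbox (l - g * k) ((Lf ^^ k) i) ((Rf ^^ k) j)) \<and>
      (\<forall>phi::nat \<times> (int^'d) \<in> allB. fst phi = l \<longrightarrow>
           Opow n m k {phi} (- int g) allB
             \<subseteq> {psi \<in> allB. fst psi = l - g * k \<and> infnorm (rho n phi psi) \<le> C}) \<and>
      (C \<le> real_of_int p * real n ^ g / (real n ^ g - 1) + 1) \<and>
      (\<forall>phi::nat \<times> (int^'d) \<in> allB. fst phi = l \<longrightarrow>
           finite (Opow n m k {phi} (- int g) allB) \<and>
           real (card (Opow n m k {phi} (- int g) allB)) \<le> (2 * C + 1) ^ CARD('d))"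
proof -
  define N where "N = int n ^ g"
  have n: "n > 0" and m: "m \<ge> 1" and p: "0 \<le> p" and N: "1 < N"
    using assms(1-3) by (auto simp: p_def N_def intro: one_less_power)
  have gk: "g * k \<le> l"
    using mult_le_mono2[OF assms(6), of g] times_div_less_eq_dividend[of g l] by linarith
  have "Lf = coarse_lo N p" "Rf = coarse_hi N p"
    by (auto simp: Lf_def Rf_def coarse_lo_def coarse_hi_def Dfl_0_iterate[OF n] N_def cvec_def vec_eq_iff)
  then have part_i: "Opow n m k (Bbox l i j) (- int g) allB = Bbox (l - g * k) ((Lf ^^ k) i) ((Rf ^^ k) j)"
    using Opow_Bbox[OF n m assms(4) gk] by (simp add: N_def p_def)
  have C: "C = coarsening_drift N p k + 1 / of_int N ^ k"
    unfolding C_def N_def using coarsening_drift_eq[OF assms(1,3)] .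
  then have drift_le_C: "coarsening_drift N p k \<le> C"
    using N by simp
  have "Opow n m k {phi} (- int g) allB \<subseteq> {psi \<in> allB. fst psi = l - g * k \<and> infnorm (rho n phi psi) \<le> C} \<and>
      finite (Opow n m k {phi} (- int g) allB) \<and>
      real (card (Opow n m k {phi} (- int g) allB)) \<le> (2 * C + 1) ^ CARD('d)"
    if "fst phi = l" for phi :: "nat \<times> (int^'d)"
  proof -
    obtain a where phi: "phi = (l, a)" using \<open>fst phi = l\<close> by (cases phi) auto
    have "(2 * coarsening_drift N p k + 1) ^ CARD('d) \<le> (2 * C + 1) ^ CARD('d)"
      using drift_le_C coarsening_drift_nonneg[OF N p, of k] by (simp add: power_mono)
    then show ?thesis
      using Opow_singleton_subset[OF assms(1,3) m gk, of a] card_Opow_singleton_le[OF assms(1,3) m gk, of a] drift_le_C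
      unfolding phi N_def p_def by fastforce
  qed
  then show ?thesis
    using part_i coarsening_drift_add_le[OF N p, of k] by (simp add: C N_def)
qed

end
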